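(* Let $X$ be a smooth toric variety with fan $\Sigma$ and set of maximal cones $\Sigma_{max}$. The sequence of $R\llbracket T^* \rrbracket_F$-modules \[ R\llbracket \mathrm{CDiv}_T(X) \rrbracket_F \xrightarrow{\ \psi\ } \prod_{\tau \in \Sigma_{max}} R\llbracket T_{\tau}^* \rrbracket_F \xrightarrow{\ \pi\ } \prod_{\tau \neq \tau'} R\llbracket T_{\tau \cap \tau'}^* \rrbracket_F \] is exact, where $\psi = (\psi_\tau)_{\tau \in \Sigma_{max}}$, and $\pi$ has, for each pair $\tau \neq \tau'$ of maximal cones, component $\mathrm{pr}_{\tau,\tau\cap\tau'} - \mathrm{pr}_{\tau',\tau\cap\tau'}$ (applied to the $\tau$- and $\tau'$-coordinates), with $\mathrm{pr}_{\tau,\mu}: R\llbracket T_\tau^* \rrbracket_F \to R\llbracket T_\mu^* \rrbracket_F$ induced by the natural quotient $T_\tau^* \to T_\mu^*$ for a face $\mu$ of $\tau$.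
   Context: Let $R$ be a commutative ring and $F$ a one-dimensional commutative formal group law over $R$; write $x +_F y = F(x,y)$. For an abelian group $M$, let $R\llbracket x_M\rrbracket$ be the completion of $R[x_\lambda : \lambda \in M]$ at the kernel of the augmentation $x_\lambda \mapsto 0$; the formal group ring $R\llbracket M \rrbracket_F$ is the quotient of $R\llbracket x_M\rrbracket$ by the closure of the ideal generated by $x_0$ and $x_{\lambda+\mu} - (x_\lambda +_F x_\mu)$; the class of $x_\lambda$ is again denoted $x_\lambda$. A group homomorphism $\phi: M \to M'$ induces $R\llbracket M \rrbracket_F \to R\llbracket M' \rrbracket_F$, $x_\lambda \mapsto x_{\phi(\lambda)}$. $T$ is a split torus with character lattice $T^*$, cocharacter lattice $T_*$ and pairing $\langle\ ,\ \rangle$. $X$ is a smooth toric variety with fan $\Sigma$ in $T_*$; $\Sigma(1)$ denotes its rays, $\sigma(1)$ the rays of a cone $\sigma$, $v_\rho$ the primitive generator of $\rho$. For a cone $\sigma$, $T_\sigma^* = T^*/\sigma^\perp$ with $\sigma^\perp = \{\alpha : \langle\alpha,v\rangle=0\ \forall v\in\sigma\}$; it has basis $\{\alpha_{\sigma,\rho}:\rho\in\sigma(1)\}$ dual to $\{v_\rho : \rho\in\sigma(1)\}$. For a face $\mu$ of $\sigma$, the natural quotient $T_\sigma^* \to T_\mu^*$ sends $\alpha_{\sigma,\rho}$ to $\alpha_{\mu,\rho}$ if $\rho\in\mu(1)$ and to $0$ otherwise. $\mathrm{CDiv}_T(X) = \bigoplus_{\rho\in\Sigma(1)} \mathbb{Z}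 D_\rho$ (free on the $T$-invariant prime divisors). $\psi_\sigma: R\llbracket \mathrm{CDiv}_T(X) \rrbracket_F \to R\llbracket T_\sigma^* \rrbracket_F$ is induced by $\sum n_\rho D_\rho \mapsto \sum_{\rho \in \sigma(1)} n_\rho \alpha_{\sigma,\rho}$. All these rings are $R\llbracket T^* \rrbracket_F$-modules via $T^* \to \mathrm{CDiv}_T(X)$, $\alpha\mapsto \sum_\rho \langle \alpha, v_\rho\rangle D_\rho$, and via the quotient maps $T^* \to T_\sigma^*$. *)

theory Defs
  imports "HOL-Analysis.Analysis" "HOL-Library.Poly_Mapping"
begin

text \<open>The completion of R[x_v : v in V] at the augmentation ideal is the inverse
limit of R[x]/I^n, i.e. formal sums of monomials in the variables V such that in each
total degree only finitely many coefficients are nonzero.\<close>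

definition mdeg :: "('v \<Rightarrow>\<^sub>0 nat) \<Rightarrow> nat" where
  "mdeg m = (\<Sum>k\<in>Poly_Mapping.keys m. Poly_Mapping.lookup m k)"

type_synonym ('v, 'r) pser = "('v \<Rightarrow>\<^sub>0 nat) \<Rightarrow> 'r"

definition ps_carrier :: "'v set \<Rightarrow> ('v, 'r::zero) pser set" where
  "ps_carrier V = {f. (\<forall>m. f m \<noteq> 0 \<longrightarrow> Poly_Mapping.keys m \<subseteq> V) \<and>
                      (\<forall>d. finite {m. mdeg m = d \<and> f m \<noteq> 0})}"

definition ps_mult :: "('v, 'r::comm_ring_1) pser \<Rightarrow> ('v, 'r) pser \<Rightarrow> ('v, 'r) pser" where
  "ps_mult f g = (\<lambda>m. \<Sum>p\<in>{p. fst p + snd p = m}. f (fst p) * g (snd p))"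

definition ps_one :: "('v, 'r::comm_ring_1) pser" where
  "ps_one = (\<lambda>m. if m = 0 then 1 else 0)"

primrec ps_pow :: "('v, 'r::comm_ring_1) pser \<Rightarrow> nat \<Rightarrow> ('v, 'r) pser" where
  "ps_pow f 0 = ps_one"
| "ps_pow f (Suc n) = ps_mult f (ps_pow f n)"

definition ps_X :: "'v \<Rightarrow> ('v, 'r::comm_ring_1) pser" where
  "ps_X v = (\<lambda>m. if m = Poly_Mapping.single v 1 then 1 else 0)"

text \<open>A two-variable power series F(x,y) = sum a i j x^i y^j is given by its coefficients
a.  Substitution F(f,g) for f, g without constant term (the sum converges degreewise,
since f^i g^j only has terms of degree at least i + j).\<close>
definition Fsub :: "(nat \<Rightarrow> nat \<Rightarrow> 'r::comm_ring_1) \<Rightarrow> ('v, 'r) pser \<Rightarrow> ('v, 'r) pser \<Rightarrow> ('v, 'r) pser" where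
  "Fsub a f g = (\<lambda>m. \<Sum>p\<in>{p. fst p + snd p \<le> mdeg m}.
                       a (fst p) (snd p) * ps_mult (ps_pow f (fst p)) (ps_pow g (snd p)) m)"

definition formal_group_law :: "(nat \<Rightarrow> nat \<Rightarrow> 'r::comm_ring_1) \<Rightarrow> bool" where
  "formal_group_law a \<longleftrightarrow>
     (\<forall>i. a i 0 = (if i = 1 then 1 else 0)) \<and>
     (\<forall>j. a 0 j = (if j = 1 then 1 else 0)) \<and>
     (\<forall>i j. a i j = a j i) \<and>
     Fsub a (Fsub a (ps_X (0::nat)) (ps_X 1)) (ps_X 2) =
       Fsub a (ps_X 0) (Fsub a (ps_X 1) (ps_X 2))"

text \<open>The abelian group M is given as a subgroup (carrier set) G of an abelian group type.\<close>

definition fgr_gens :: "(nat \<Rightarrow> nat \<Rightarrow> 'r::comm_ring_1) \<Rightarrow> 'm::ab_group_add set \<Rightarrow> ('m, 'r) pser set" where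
  "fgr_gens a G = {ps_X 0} \<union>
     {(\<lambda>m. ps_X (l + u) m - Fsub a (ps_X l) (ps_X u) m) | l u. l \<in> G \<and> u \<in> G}"

inductive_set fgr_ideal :: "(nat \<Rightarrow> nat \<Rightarrow> 'r::comm_ring_1) \<Rightarrow> 'm::ab_group_add set \<Rightarrow> ('m, 'r) pser set"
  for a G where
  zero: "(\<lambda>_. 0) \<in> fgr_ideal a G"
| step: "j \<in> fgr_ideal a G \<Longrightarrow> h \<in> ps_carrier G \<Longrightarrow> g \<in> fgr_gens a G \<Longrightarrow>
         (\<lambda>m. j m + ps_mult h g m) \<in> fgr_ideal a G"

text \<open>Equality in R[[G]]_F: the difference lies in the closure of the ideal for the adic
topology, i.e. for every n it agrees with an element of the ideal in all degrees < n.\<close>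
definition fgr_eq :: "(nat \<Rightarrow> nat \<Rightarrow> 'r::comm_ring_1) \<Rightarrow> 'm::ab_group_add set \<Rightarrow>
                       ('m, 'r) pser \<Rightarrow> ('m, 'r) pser \<Rightarrow> bool" where
  "fgr_eq a G f g \<longleftrightarrow> (\<forall>n. \<exists>j\<in>fgr_ideal a G. \<forall>m. mdeg m < n \<longrightarrow> f m - g m = j m)"

definition mpush :: "('v \<Rightarrow> 'w) \<Rightarrow> ('v \<Rightarrow>\<^sub>0 nat) \<Rightarrow> ('w \<Rightarrow>\<^sub>0 nat)" where
  "mpush \<phi> m = (\<Sum>k\<in>Poly_Mapping.keys m. Poly_Mapping.single (\<phi> k) (Poly_Mapping.lookup m k))"

definition ps_map :: "('v \<Rightarrow> 'w) \<Rightarrow> ('v, 'r::comm_ring_1) pser \<Rightarrow> ('w, 'r) pser" where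
  "ps_map \<phi> f = (\<lambda>m'. \<Sum>m\<in>{m. mpush \<phi> m = m' \<and> f m \<noteq> 0}. f m)"

text \<open>Lattice T_* = Z^d, i.e. int^'d.  A cone of a smooth fan is represented by the set
of primitive generators of its rays.\<close>

definition zbasis :: "(int^'d::finite) set \<Rightarrow> bool" where
  "zbasis B \<longleftrightarrow> finite B \<and>
     (\<forall>x. \<exists>!c. (\<forall>b. b \<notin> B \<longrightarrow> c b = 0) \<and> x = (\<Sum>b\<in>B. c b *s b))"

definition realv :: "int^'d::finite \<Rightarrow> real^'d" where
  "realv v = (\<chi> i. real_of_int (v $ i))"

definition rcone :: "(int^'d::finite) set \<Rightarrow> (real^'d) set" where
  "rcone S = {x. \<exists>c. (\<forall>s\<in>S. c s \<ge> 0) \<and> x = (\<Sum>s\<in>S. c s *\<^sub>R realv s)}"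

definition smooth_fan :: "(int^'d::finite) set set \<Rightarrow> bool" where
  "smooth_fan \<Sigma> \<longleftrightarrow> finite \<Sigma> \<and> {} \<in> \<Sigma> \<and>
     (\<forall>S\<in>\<Sigma>. \<forall>S'. S' \<subseteq> S \<longrightarrow> S' \<in> \<Sigma>) \<and>
     (\<forall>S\<in>\<Sigma>. \<exists>B. S \<subseteq> B \<and> zbasis B) \<and>
     (\<forall>S\<in>\<Sigma>. \<forall>S'\<in>\<Sigma>. rcone S \<inter> rcone S' = rcone (S \<inter> S'))"

definition max_cones :: "'a set set \<Rightarrow> 'a set set" where
  "max_cones \<Sigma> = {\<tau>\<in>\<Sigma>. \<forall>\<tau>'\<in>\<Sigma>. \<tau> \<subseteq> \<tau>' \<longrightarrow> \<tau>' = \<tau>}"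

text \<open>Z^S, free abelian group on S: CDiv_T(X) = Z^(Sigma(1)), and
T_sigma^* identified with Z^(sigma(1)) via the basis alpha_(sigma,rho).\<close>
definition zfree :: "'a set \<Rightarrow> ('a \<Rightarrow>\<^sub>0 int) set" where
  "zfree S = {l. Poly_Mapping.keys l \<subseteq> S}"

text \<open>Restriction Z^A -> Z^S (D_rho |-> alpha_(sigma,rho) or 0; and T_tau^* -> T_mu^*).\<close>
definition zrestr :: "'a set \<Rightarrow> ('a \<Rightarrow>\<^sub>0 int) \<Rightarrow> ('a \<Rightarrow>\<^sub>0 int)" where
  "zrestr S l = Abs_poly_mapping (\<lambda>v. if v \<in> S then Poly_Mapping.lookup l v else 0)"

end

theory Submission
  imports Defs
begin

text \<open>
  Restriction to faces is functorial: restricting from \<tau> to \<tau> \<inter> \<tau>' after restricting to \<tau>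
  is restricting to \<tau> \<inter> \<tau>' directly, so \<pi> \<circ> \<psi> = 0. For exactness in the middle,
  glue a compatible family A one maximal cone at a time. If b already restricts to A \<sigma> on
  the cones \<sigma> treated so far, then b + A \<tau> - res(\<tau>, b) restricts to A \<tau> on \<tau> exactly,
  while on an earlier cone \<sigma> its restriction differs from res(\<sigma>, b) only by
  res(\<sigma> \<inter> \<tau>, A \<tau>) - res(\<sigma> \<inter> \<tau>, b), which vanishes in the formal group ring of
  \<sigma> \<inter> \<tau> by compatibility. All of this happens on representatives in the completed
  power series rings, on which restriction is a ring homomorphism carrying the defining
  ideal into the defining ideal.
\<close>

lemma mdeg_conv_sum:
  "finite K \<Longrightarrow> Poly_Mapping.keys m \<subseteq> K \<Longrightarrow> mdeg m = (\<Sum>k\<in>K. Poly_Mapping.lookup m k)"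
  unfolding mdeg_def by (rule sum.mono_neutral_left) (auto simp: in_keys_iff)

lemma mdeg_add: "mdeg (p + q) = mdeg p + mdeg q"
proof -
  let ?K = "Poly_Mapping.keys p \<union> Poly_Mapping.keys q"
  have "mdeg (p + q) = (\<Sum>k\<in>?K. Poly_Mapping.lookup (p + q) k)"
    by (rule mdeg_conv_sum) (use keys_add[of p q] in auto)
  also have "\<dots> = mdeg p + mdeg q"
    by (simp add: lookup_add sum.distrib mdeg_conv_sum[of ?K])
  finally show ?thesis .
qed

lemma mdeg_zero [simp]: "mdeg 0 = 0"
  by (simp add: mdeg_def)

lemma mdeg_single [simp]: "mdeg (Poly_Mapping.single k n) = n"
  by (simp add: mdeg_def)

lemma mdeg_sum: "mdeg (sum f K) = (\<Sum>k\<in>K. mdeg (f k))"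
  by (induction K rule: infinite_finite_induct) (auto simp: mdeg_add)

lemma finite_sum_decompositions:
  "finite {p :: ('v \<Rightarrow>\<^sub>0 nat) \<times> ('v \<Rightarrow>\<^sub>0 nat). fst p + snd p = m}"
proof -
  define P where "P = {p :: 'v \<Rightarrow>\<^sub>0 nat. \<forall>k. Poly_Mapping.lookup p k \<le> Poly_Mapping.lookup m k}"
  have "inj_on (\<lambda>p. restrict (Poly_Mapping.lookup p) (Poly_Mapping.keys m)) P"
  proof (rule inj_onI)
    fix p q
    assume "p \<in> P" "q \<in> P"
      and eq: "restrict (Poly_Mapping.lookup p) (Poly_Mapping.keys m) =
               restrict (Poly_Mapping.lookup q) (Poly_Mapping.keys m)"
    show "p = q"
    proof (rule poly_mapping_eqI)
      fix k
      show "Poly_Mapping.lookup p k = Poly_Mapping.lookup q k"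
        using fun_cong[OF eq, of k] \<open>p \<in> P\<close> \<open>q \<in> P\<close>
        by (cases "k \<in> Poly_Mapping.keys m") (auto simp: P_def in_keys_iff, metis le_zero_eq)
    qed
  qed
  moreover have "(\<lambda>p. restrict (Poly_Mapping.lookup p) (Poly_Mapping.keys m)) ` P
      \<subseteq> PiE (Poly_Mapping.keys m) (\<lambda>k. {0..Poly_Mapping.lookup m k})"
    unfolding P_def by auto
  ultimately have "finite P"
    by (meson finite_PiE finite_atLeastAtMost finite_imageD finite_keys finite_subset)
  moreover have "{p. fst p + snd p = m} \<subseteq> P \<times> P"
    by (auto simp: P_def lookup_add)
  ultimately show ?thesis
    by (meson finite_SigmaI finite_subset)
qed

lemma mpush_conv_sum:
  "finite K \<Longrightarrow> Poly_Mapping.keys m \<subseteq> K \<Longrightarrow>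
   mpush \<phi> m = (\<Sum>k\<in>K. Poly_Mapping.single (\<phi> k) (Poly_Mapping.lookup m k))"
  unfolding mpush_def by (rule sum.mono_neutral_left) (auto simp: in_keys_iff)

lemma mpush_add: "mpush \<phi> (p + q) = mpush \<phi> p + mpush \<phi> q"
proof -
  let ?K = "Poly_Mapping.keys p \<union> Poly_Mapping.keys q"
  have "mpush \<phi> (p + q) = (\<Sum>k\<in>?K. Poly_Mapping.single (\<phi> k) (Poly_Mapping.lookup (p + q) k))"
    by (rule mpush_conv_sum) (use keys_add[of p q] in auto)
  also have "\<dots> = mpush \<phi> p + mpush \<phi> q"
    by (simp add: lookup_add single_add sum.distrib mpush_conv_sum[of ?K])
  finally show ?thesis .
qed

lemma mpush_sum: "mpush \<phi> (sum f K) = (\<Sum>k\<in>K. mpush \<phi> (f k))"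
  by (induction K rule: infinite_finite_induct) (auto simp: mpush_add mpush_def[of _ 0])

lemma mpush_single [simp]: "mpush \<phi> (Poly_Mapping.single v n) = Poly_Mapping.single (\<phi> v) n"
  by (simp add: mpush_def)

lemma mdeg_mpush [simp]: "mdeg (mpush \<phi> m) = mdeg m"
  by (simp add: mpush_def mdeg_sum mdeg_def[of m])

lemma mpush_mpush: "mpush g (mpush f m) = mpush (g \<circ> f) m"
  by (simp add: mpush_def[of f] mpush_sum mpush_def[of "g \<circ> f"])

lemma mpush_cong_id:
  assumes "\<And>k. k \<in> Poly_Mapping.keys m \<Longrightarrow> \<phi> k = k"
  shows "mpush \<phi> m = m"
proof (rule poly_mapping_eqI)
  fix j
  show "Poly_Mapping.lookup (mpush \<phi> m) j = Poly_Mapping.lookup m j"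
    using assms
    by (cases "j \<in> Poly_Mapping.keys m")
       (auto simp: mpush_def lookup_sum lookup_single when_def in_keys_iff sum.delta
             intro!: sum.neutral)
qed

lemma keys_mpush: "Poly_Mapping.keys (mpush \<phi> m) \<subseteq> \<phi> ` Poly_Mapping.keys m"
proof -
  have "Poly_Mapping.keys (mpush \<phi> m) \<subseteq>
        (\<Union>k\<in>Poly_Mapping.keys m. Poly_Mapping.keys (Poly_Mapping.single (\<phi> k) (Poly_Mapping.lookup m k)))"
    unfolding mpush_def by (rule keys_sum)
  then show ?thesis by auto
qed

definition degwise_finite :: "('v, 'r::zero) pser \<Rightarrow> bool" where
  "degwise_finite f \<longleftrightarrow> (\<forall>d. finite {m. mdeg m = d \<and> f m \<noteq> 0})"

lemma ps_carrier_iff: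
  "f \<in> ps_carrier V \<longleftrightarrow> (\<forall>m. f m \<noteq> 0 \<longrightarrow> Poly_Mapping.keys m \<subseteq> V) \<and> degwise_finite f"
  by (simp add: ps_carrier_def degwise_finite_def)

lemma ps_carrier_degwise_finite: "f \<in> ps_carrier V \<Longrightarrow> degwise_finite f"
  by (simp add: ps_carrier_iff)

lemma ps_carrier_mono: "V \<subseteq> W \<Longrightarrow> ps_carrier V \<subseteq> ps_carrier W"
  unfolding ps_carrier_def by blast

lemma lincomb_support_subset:
  fixes H :: "('v, 'r::comm_ring_1) pser"
  assumes "\<And>m. H m = (\<Sum>i\<in>I (mdeg m). c i * h i m)"
  shows "{m. mdeg m = d \<and> H m \<noteq> 0} \<subseteq> (\<Union>i\<in>I d. {m. mdeg m = d \<and> h i m \<noteq> 0})"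
proof
  fix m assume "m \<in> {m. mdeg m = d \<and> H m \<noteq> 0}"
  then obtain i where "i \<in> I d" "h i m \<noteq> 0" "mdeg m = d"
    using assms[of m] by (metis (mono_tags, lifting) mem_Collect_eq mult_zero_right sum.neutral)
  then show "m \<in> (\<Union>i\<in>I d. {m. mdeg m = d \<and> h i m \<noteq> 0})" by auto
qed

lemma degwise_finite_lincomb:
  fixes H :: "('v, 'r::comm_ring_1) pser"
  assumes H: "\<And>m. H m = (\<Sum>i\<in>I (mdeg m). c i * h i m)"
    and fin_I: "\<And>d. finite (I d)" and fin_h: "\<And>d i. i \<in> I d \<Longrightarrow> degwise_finite (h i)"
  shows "degwise_finite H"
  unfolding degwise_finite_def
proof
  fix d
  have "finite (\<Union>i\<in>I d. {m. mdeg m = d \<and> h i m \<noteq> 0})"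
    using fin_I fin_h unfolding degwise_finite_def by blast
  then show "finite {m. mdeg m = d \<and> H m \<noteq> 0}"
    by (rule finite_subset[OF lincomb_support_subset[where I=I and c=c and h=h, OF H]])
qed

lemma degwise_finite_add:
  fixes f g :: "('v, 'r::comm_ring_1) pser"
  assumes "degwise_finite f" "degwise_finite g"
  shows "degwise_finite (\<lambda>m. f m + g m)"
  by (rule degwise_finite_lincomb[where I="\<lambda>_. {0::nat, 1}" and c="\<lambda>_. 1"
        and h="\<lambda>i. if i = 0 then f else g"]) (use assms in auto)

lemma degwise_finite_diff:
  fixes f g :: "('v, 'r::comm_ring_1) pser"
  assumes "degwise_finite f" "degwise_finite g"
  shows "degwise_finite (\<lambda>m. f m - g m)"
  by (rule degwise_finite_lincomb[where I="\<lambda>_. {0::nat, 1}" and c="\<lambda>i. if i = 0 then 1 else -1"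
        and h="\<lambda>i. if i = 0 then f else g"]) (use assms in auto)

lemma degwise_finite_zero: "degwise_finite (\<lambda>_. 0::'r::zero)"
  unfolding degwise_finite_def by simp

lemma degwise_finite_one: "degwise_finite (ps_one :: ('v, 'r::comm_ring_1) pser)"
  unfolding degwise_finite_def
  by (auto intro: finite_subset[of _ "{0}"] simp: ps_one_def)

lemma degwise_finite_X: "degwise_finite (ps_X v :: ('v, 'r::comm_ring_1) pser)"
  unfolding degwise_finite_def
  by (auto intro: finite_subset[of _ "{Poly_Mapping.single v 1}"] simp: ps_X_def)

definition low_support :: "('v, 'r::zero) pser \<Rightarrow> nat \<Rightarrow> ('v \<Rightarrow>\<^sub>0 nat) set" where
  "low_support f d = {p. mdeg p \<le> d \<and> f p \<noteq> 0}"

lemma finite_low_support: "degwise_finite f \<Longrightarrow> finite (low_support f d)"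
proof -
  assume "degwise_finite f"
  moreover have "low_support f d = (\<Union>e\<in>{..d}. {p. mdeg p = e \<and> f p \<noteq> 0})"
    unfolding low_support_def by auto
  ultimately show ?thesis
    unfolding degwise_finite_def by simp
qed

lemma ps_mult_conv_low_support:
  fixes f g :: "('v, 'r::comm_ring_1) pser"
  assumes "mdeg m \<le> d"
  shows "ps_mult f g m =
    (\<Sum>x\<in>{x\<in>low_support f d \<times> low_support g d. fst x + snd x = m}. f (fst x) * g (snd x))"
  unfolding ps_mult_def
proof (rule sum.mono_neutral_right[OF finite_sum_decompositions])
  show "\<forall>x\<in>{p. fst p + snd p = m} - {x \<in> low_support f d \<times> low_support g d. fst x + snd x = m}.
          f (fst x) * g (snd x) = 0"
  proof
    fix x assume x: "x \<in> {p. fst p + snd p = m} - {x \<in> low_support f d \<times> low_support g d. fst x + snd x = m}"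
    then have "mdeg (fst x) \<le> d" "mdeg (snd x) \<le> d"
      using assms mdeg_add[of "fst x" "snd x"] by auto
    then show "f (fst x) * g (snd x) = 0"
      using x by (auto simp: low_support_def mem_Times_iff)
  qed
qed auto

lemma ps_mult_nonzero_decomposition:
  fixes f g :: "('v, 'r::comm_ring_1) pser"
  assumes "ps_mult f g m \<noteq> 0"
  shows "m \<in> (\<lambda>x. fst x + snd x) ` (low_support f (mdeg m) \<times> low_support g (mdeg m))"
proof -
  have "(\<Sum>x\<in>{x\<in>low_support f (mdeg m) \<times> low_support g (mdeg m). fst x + snd x = m}.
          f (fst x) * g (snd x)) \<noteq> 0"
    using assms ps_mult_conv_low_support[of m "mdeg m" f g] by simp
  then obtain x where "x \<in> low_support f (mdeg m) \<times> low_support g (mdeg m)" "fst x + snd x = m"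
    by (metis (mono_tags, lifting) empty_Collect_eq sum.empty)
  then show ?thesis by force
qed

lemma degwise_finite_mult:
  fixes f g :: "('v, 'r::comm_ring_1) pser"
  assumes "degwise_finite f" "degwise_finite g"
  shows "degwise_finite (ps_mult f g)"
  unfolding degwise_finite_def
proof
  fix d
  have "{m. mdeg m = d \<and> ps_mult f g m \<noteq> 0} \<subseteq>
        (\<lambda>x. fst x + snd x) ` (low_support f d \<times> low_support g d)"
    using ps_mult_nonzero_decomposition by blast
  then show "finite {m. mdeg m = d \<and> ps_mult f g m \<noteq> 0}"
    using finite_low_support[OF assms(1)] finite_low_support[OF assms(2)]
    by (meson finite_SigmaI finite_imageI finite_subset)
qed

lemma degwise_finite_pow: "degwise_finite f \<Longrightarrow> degwise_finite (ps_pow f n)"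
  by (induction n) (auto simp: degwise_finite_one degwise_finite_mult)

lemma finite_pairs_sum_le: "finite {p :: nat \<times> nat. fst p + snd p \<le> d}"
  by (rule finite_subset[of _ "{..d} \<times> {..d}"]) auto

lemma Fsub_conv_lincomb:
  "Fsub a f g m = (\<Sum>p\<in>{p. fst p + snd p \<le> mdeg m}.
     a (fst p) (snd p) * ps_mult (ps_pow f (fst p)) (ps_pow g (snd p)) m)"
  by (simp add: Fsub_def)

lemma degwise_finite_Fsub:
  fixes f g :: "('v, 'r::comm_ring_1) pser"
  assumes "degwise_finite f" "degwise_finite g"
  shows "degwise_finite (Fsub a f g)"
  by (rule degwise_finite_lincomb[where I="\<lambda>d. {p. fst p + snd p \<le> d}",
        OF Fsub_conv_lincomb finite_pairs_sum_le])
     (use assms in \<open>auto intro: degwise_finite_mult degwise_finite_pow\<close>)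

lemma ps_map_conv_sum:
  fixes f :: "('v, 'r::comm_ring_1) pser"
  assumes "finite S" "{m. mdeg m = mdeg m' \<and> f m \<noteq> 0} \<subseteq> S"
  shows "ps_map \<phi> f m' = (\<Sum>m\<in>{m\<in>S. mpush \<phi> m = m'}. f m)"
  unfolding ps_map_def
proof (rule sum.mono_neutral_left)
  show "{m. mpush \<phi> m = m' \<and> f m \<noteq> 0} \<subseteq> {m \<in> S. mpush \<phi> m = m'}"
    using assms(2) by auto
qed (use assms(1) in auto)

lemma ps_map_nonzero_preimage:
  assumes "ps_map \<phi> f m' \<noteq> 0"
  obtains m where "mpush \<phi> m = m'" "f m \<noteq> 0"
proof -
  have "{m. mpush \<phi> m = m' \<and> f m \<noteq> 0} \<noteq> {}"
    using assms unfolding ps_map_def by (metis sum.empty)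
  then show ?thesis using that by blast
qed

lemma degwise_finite_ps_map:
  fixes f :: "('v, 'r::comm_ring_1) pser"
  assumes "degwise_finite f"
  shows "degwise_finite (ps_map \<phi> f)"
  unfolding degwise_finite_def
proof
  fix d
  have "{m'. mdeg m' = d \<and> ps_map \<phi> f m' \<noteq> 0} \<subseteq> mpush \<phi> ` {m. mdeg m = d \<and> f m \<noteq> 0}"
  proof
    fix m' assume "m' \<in> {m'. mdeg m' = d \<and> ps_map \<phi> f m' \<noteq> 0}"
    then obtain m where "mpush \<phi> m = m'" "f m \<noteq> 0" "mdeg m' = d"
      by (auto elim: ps_map_nonzero_preimage)
    then show "m' \<in> mpush \<phi> ` {m. mdeg m = d \<and> f m \<noteq> 0}" by force
  qed
  then show "finite {m'. mdeg m' = d \<and> ps_map \<phi> f m' \<noteq> 0}"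
    using assms unfolding degwise_finite_def by (meson finite_imageI finite_subset)
qed

lemma ps_carrier_ps_map:
  fixes f :: "('v, 'r::comm_ring_1) pser"
  assumes "degwise_finite f" "\<And>v. \<phi> v \<in> W"
  shows "ps_map \<phi> f \<in> ps_carrier W"
  unfolding ps_carrier_iff
proof (intro conjI allI impI degwise_finite_ps_map[OF assms(1)])
  fix m' assume "ps_map \<phi> f m' \<noteq> 0"
  then obtain m where "mpush \<phi> m = m'" by (rule ps_map_nonzero_preimage)
  then show "Poly_Mapping.keys m' \<subseteq> W"
    using keys_mpush[of \<phi> m] assms(2) by blast
qed

lemma ps_map_lincomb:
  fixes H :: "('v, 'r::comm_ring_1) pser"
  assumes H: "\<And>m. H m = (\<Sum>i\<in>I (mdeg m). c i * h i m)"
    and fin_I: "\<And>d. finite (I d)" and fin_h: "\<And>d i. i \<in> I d \<Longrightarrow> degwise_finite (h i)"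
  shows "ps_map \<phi> H m' = (\<Sum>i\<in>I (mdeg m'). c i * ps_map \<phi> (h i) m')"
proof -
  define d where "d = mdeg m'"
  define S where "S = (\<Union>i\<in>I d. {m. mdeg m = d \<and> h i m \<noteq> 0})"
  have fin_S: "finite S"
    unfolding S_def using fin_I fin_h unfolding degwise_finite_def by blast
  have supp_H: "{m. mdeg m = mdeg m' \<and> H m \<noteq> 0} \<subseteq> S"
    unfolding S_def d_def by (rule lincomb_support_subset[where I=I and c=c and h=h, OF H])
  have "ps_map \<phi> H m' = (\<Sum>m\<in>{m\<in>S. mpush \<phi> m = m'}. \<Sum>i\<in>I d. c i * h i m)"
    unfolding ps_map_conv_sum[OF fin_S supp_H] by (rule sum.cong) (auto simp: H S_def)
  also have "\<dots> = (\<Sum>i\<in>I d. c i * (\<Sum>m\<in>{m\<in>S. mpush \<phi> m = m'}. h i m))"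
    by (subst sum.swap) (simp add: sum_distrib_left)
  also have "\<dots> = (\<Sum>i\<in>I d. c i * ps_map \<phi> (h i) m')"
  proof (rule sum.cong[OF refl])
    fix i assume "i \<in> I d"
    then have "{m. mdeg m = mdeg m' \<and> h i m \<noteq> 0} \<subseteq> S"
      unfolding S_def d_def by blast
    then show "c i * (\<Sum>m\<in>{m\<in>S. mpush \<phi> m = m'}. h i m) = c i * ps_map \<phi> (h i) m'"
      by (simp add: ps_map_conv_sum[OF fin_S])
  qed
  finally show ?thesis by (simp add: d_def)
qed

lemma ps_map_add:
  fixes f g :: "('v, 'r::comm_ring_1) pser"
  assumes "degwise_finite f" "degwise_finite g"
  shows "ps_map \<phi> (\<lambda>m. f m + g m) = (\<lambda>m. ps_map \<phi> f m + ps_map \<phi> g m)"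
  using ps_map_lincomb[where I="\<lambda>_. {0::nat, 1}" and c="\<lambda>_. 1"
      and h="\<lambda>i. if i = 0 then f else g" and H="\<lambda>m. f m + g m" and \<phi>=\<phi>] assms
  by auto

lemma ps_map_diff:
  fixes f g :: "('v, 'r::comm_ring_1) pser"
  assumes "degwise_finite f" "degwise_finite g"
  shows "ps_map \<phi> (\<lambda>m. f m - g m) = (\<lambda>m. ps_map \<phi> f m - ps_map \<phi> g m)"
  using ps_map_lincomb[where I="\<lambda>_. {0::nat, 1}" and c="\<lambda>i. if i = 0 then 1 else -1"
      and h="\<lambda>i. if i = 0 then f else g" and H="\<lambda>m. f m - g m" and \<phi>=\<phi>] assms
  by auto

lemma ps_map_cong_mdeg:
  fixes f g :: "('v, 'r::comm_ring_1) pser"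
  assumes "degwise_finite f" "degwise_finite g" "\<And>m. mdeg m = mdeg m' \<Longrightarrow> f m = g m"
  shows "ps_map \<phi> f m' = ps_map \<phi> g m'"
proof -
  define S where "S = {m. mdeg m = mdeg m' \<and> f m \<noteq> 0} \<union> {m. mdeg m = mdeg m' \<and> g m \<noteq> 0}"
  have fin_S: "finite S"
    using assms(1,2) unfolding S_def degwise_finite_def by blast
  have "ps_map \<phi> f m' = (\<Sum>m\<in>{m\<in>S. mpush \<phi> m = m'}. f m)"
    by (rule ps_map_conv_sum[OF fin_S]) (auto simp: S_def)
  also have "\<dots> = (\<Sum>m\<in>{m\<in>S. mpush \<phi> m = m'}. g m)"
    by (rule sum.cong) (auto simp: S_def assms(3))
  also have "\<dots> = ps_map \<phi> g m'"
    by (rule ps_map_conv_sum[OF fin_S, symmetric]) (auto simp: S_def)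
  finally show ?thesis .
qed

lemma ps_map_zero: "ps_map \<phi> (\<lambda>_. 0::'r::comm_ring_1) = (\<lambda>_. 0)"
  unfolding ps_map_def by simp

lemma ps_map_one: "ps_map \<phi> (ps_one :: ('v, 'r::comm_ring_1) pser) = ps_one"
proof
  fix m'
  have "ps_map \<phi> (ps_one :: ('v, 'r) pser) m' = (\<Sum>m\<in>{m\<in>{0}. mpush \<phi> m = m'}. ps_one m)"
    by (rule ps_map_conv_sum) (auto simp: ps_one_def)
  also have "{m\<in>{0}. mpush \<phi> m = m'} = (if m' = 0 then {0} else {})"
    by (auto simp: mpush_def)
  also have "(\<Sum>m\<in>(if m' = 0 then {0} else {}). ps_one m) = (ps_one m' :: 'r)"
    by (simp add: ps_one_def)
  finally show "ps_map \<phi> (ps_one :: ('v, 'r) pser) m' = ps_one m'" .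
qed

lemma ps_map_X: "ps_map \<phi> (ps_X v :: ('v, 'r::comm_ring_1) pser) = ps_X (\<phi> v)"
proof
  fix m'
  have "ps_map \<phi> (ps_X v :: ('v, 'r) pser) m' =
        (\<Sum>m\<in>{m\<in>{Poly_Mapping.single v 1}. mpush \<phi> m = m'}. ps_X v m)"
    by (rule ps_map_conv_sum) (auto simp: ps_X_def)
  also have "{m\<in>{Poly_Mapping.single v 1}. mpush \<phi> m = m'} =
             (if Poly_Mapping.single (\<phi> v) 1 = m' then {Poly_Mapping.single v 1} else {})"
    by auto
  also have "(\<Sum>m\<in>\<dots>. ps_X v m) = (ps_X (\<phi> v) m' :: 'r)"
    by (simp add: ps_X_def)
  finally show "ps_map \<phi> (ps_X v :: ('v, 'r) pser) m' = ps_X (\<phi> v) m'" .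
qed

lemma ps_map_comp:
  fixes f :: "('v, 'r::comm_ring_1) pser" and \<phi> :: "'v \<Rightarrow> 'w" and \<psi> :: "'w \<Rightarrow> 'u"
  assumes "degwise_finite f"
  shows "ps_map \<psi> (ps_map \<phi> f) = ps_map (\<psi> \<circ> \<phi>) f"
proof
  fix m'' :: "'u \<Rightarrow>\<^sub>0 nat"
  define D where "D = {m. mdeg m = mdeg m'' \<and> f m \<noteq> 0}"
  define E where "E = mpush \<phi> ` D"
  have fin_D: "finite D" and fin_E: "finite E"
    using assms unfolding D_def E_def degwise_finite_def by auto
  have supp: "{m'. mdeg m' = mdeg m'' \<and> ps_map \<phi> f m' \<noteq> 0} \<subseteq> E"
  proof
    fix m' assume "m' \<in> {m'. mdeg m' = mdeg m'' \<and> ps_map \<phi> f m' \<noteq> 0}"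
    then obtain m where "mpush \<phi> m = m'" "f m \<noteq> 0" "mdeg m' = mdeg m''"
      by (auto elim: ps_map_nonzero_preimage)
    then show "m' \<in> E" unfolding E_def D_def by force
  qed
  have "ps_map \<psi> (ps_map \<phi> f) m'' = (\<Sum>m'\<in>{m'\<in>E. mpush \<psi> m' = m''}. ps_map \<phi> f m')"
    by (rule ps_map_conv_sum[OF fin_E supp])
  also have "\<dots> = (\<Sum>m'\<in>{m'\<in>E. mpush \<psi> m' = m''}. \<Sum>m\<in>{m\<in>D. mpush \<phi> m = m'}. f m)"
    by (intro sum.cong refl ps_map_conv_sum[OF fin_D]) (auto simp: D_def)
  also have "\<dots> = (\<Sum>m'\<in>{m'\<in>E. mpush \<psi> m' = m''}.
                    \<Sum>m\<in>{m\<in>{m\<in>D. mpush \<psi> (mpush \<phi> m) = m''}. mpush \<phi> m = m'}. f m)"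
    by (intro sum.cong refl arg_cong[where f="sum f"]) auto
  also have "\<dots> = (\<Sum>m\<in>{m\<in>D. mpush \<psi> (mpush \<phi> m) = m''}. f m)"
    by (rule sum.group) (use fin_D fin_E in \<open>auto simp: E_def\<close>)
  also have "\<dots> = ps_map (\<psi> \<circ> \<phi>) f m''"
    using ps_map_conv_sum[OF fin_D, where f=f and m'=m'' and \<phi>="\<psi> \<circ> \<phi>"]
    by (simp add: D_def mpush_mpush)
  finally show "ps_map \<psi> (ps_map \<phi> f) m'' = ps_map (\<psi> \<circ> \<phi>) f m''" .
qed

lemma ps_map_cong_id:
  fixes f :: "('v, 'r::comm_ring_1) pser"
  assumes "f \<in> ps_carrier V" "\<And>v. v \<in> V \<Longrightarrow> \<phi> v = v"
  shows "ps_map \<phi> f = f"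
proof
  fix m'
  have "\<And>m. f m \<noteq> 0 \<Longrightarrow> mpush \<phi> m = m"
    using assms unfolding ps_carrier_def by (intro mpush_cong_id) blast
  then have "{m. mpush \<phi> m = m' \<and> f m \<noteq> 0} = (if f m' \<noteq> 0 then {m'} else {})"
    by force
  then show "ps_map \<phi> f m' = f m'"
    unfolding ps_map_def by auto
qed

lemma ps_map_mult:
  fixes f g :: "('v, 'r::comm_ring_1) pser" and \<phi> :: "'v \<Rightarrow> 'w"
  assumes fin_f: "degwise_finite f" and fin_g: "degwise_finite g"
  shows "ps_map \<phi> (ps_mult f g) = ps_mult (ps_map \<phi> f) (ps_map \<phi> g)"
proof
  fix m' :: "'w \<Rightarrow>\<^sub>0 nat"
  define d where "d = mdeg m'"
  define P where "P = low_support f d \<times> low_support g d"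
  define S where "S = (\<lambda>x. fst x + snd x) ` P"
  define P' where "P' = {x\<in>P. mpush \<phi> (fst x + snd x) = m'}"
  have fin_P: "finite P" and fin_S: "finite S"
    unfolding P_def S_def using finite_low_support[OF fin_f] finite_low_support[OF fin_g] by auto
  have supp: "{m. mdeg m = mdeg m' \<and> ps_mult f g m \<noteq> 0} \<subseteq> S"
    unfolding S_def P_def d_def using ps_mult_nonzero_decomposition by fastforce
  have "ps_map \<phi> (ps_mult f g) m' = (\<Sum>m\<in>{m\<in>S. mpush \<phi> m = m'}. ps_mult f g m)"
    by (rule ps_map_conv_sum[OF fin_S supp])
  also have "\<dots> = (\<Sum>m\<in>{m\<in>S. mpush \<phi> m = m'}.
                    \<Sum>x\<in>{x\<in>P'. fst x + snd x = m}. f (fst x) * g (snd x))"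
  proof (rule sum.cong[OF refl])
    fix m assume m: "m \<in> {m\<in>S. mpush \<phi> m = m'}"
    then have "ps_mult f g m = (\<Sum>x\<in>{x\<in>P. fst x + snd x = m}. f (fst x) * g (snd x))"
      unfolding P_def d_def by (intro ps_mult_conv_low_support) auto
    also have "{x\<in>P. fst x + snd x = m} = {x\<in>P'. fst x + snd x = m}"
      using m unfolding P'_def by auto
    finally show "ps_mult f g m = (\<Sum>x\<in>{x\<in>P'. fst x + snd x = m}. f (fst x) * g (snd x))" .
  qed
  also have "\<dots> = (\<Sum>x\<in>P'. f (fst x) * g (snd x))"
    by (rule sum.group) (use fin_P fin_S in \<open>auto simp: P'_def S_def\<close>)
  also have "\<dots> = (\<Sum>y\<in>{y. fst y + snd y = m'}.
                    \<Sum>x\<in>{x\<in>P'. (mpush \<phi> (fst x), mpush \<phi> (snd x)) = y}. f (fst x) * g (snd x))"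
    by (rule sum.group[symmetric])
       (use fin_P finite_sum_decompositions in \<open>auto simp: P'_def mpush_add\<close>)
  also have "\<dots> = (\<Sum>y\<in>{y. fst y + snd y = m'}. ps_map \<phi> f (fst y) * ps_map \<phi> g (snd y))"
  proof (rule sum.cong[OF refl])
    fix y :: "('w \<Rightarrow>\<^sub>0 nat) \<times> ('w \<Rightarrow>\<^sub>0 nat)"
    assume y: "y \<in> {y. fst y + snd y = m'}"
    then have "mdeg (fst y) \<le> d" "mdeg (snd y) \<le> d"
      using mdeg_add[of "fst y" "snd y"] by (auto simp: d_def)
    then have "ps_map \<phi> f (fst y) = (\<Sum>p\<in>{p\<in>low_support f d. mpush \<phi> p = fst y}. f p)"
      and "ps_map \<phi> g (snd y) = (\<Sum>q\<in>{q\<in>low_support g d. mpush \<phi> q = snd y}. g q)"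
      by (intro ps_map_conv_sum finite_low_support fin_f fin_g; auto simp: low_support_def)+
    moreover have "{x\<in>P'. (mpush \<phi> (fst x), mpush \<phi> (snd x)) = y} =
        {p\<in>low_support f d. mpush \<phi> p = fst y} \<times> {q\<in>low_support g d. mpush \<phi> q = snd y}"
      using y unfolding P'_def P_def by (auto simp: mpush_add)
    ultimately show "(\<Sum>x\<in>{x\<in>P'. (mpush \<phi> (fst x), mpush \<phi> (snd x)) = y}. f (fst x) * g (snd x)) =
        ps_map \<phi> f (fst y) * ps_map \<phi> g (snd y)"
      by (simp add: sum_product sum.cartesian_product case_prod_beta)
  qed
  also have "\<dots> = ps_mult (ps_map \<phi> f) (ps_map \<phi> g) m'"
    by (simp add: ps_mult_def)
  finally show "ps_map \<phi> (ps_mult f g) m' = ps_mult (ps_map \<phi> f) (ps_map \<phi> g) m'" .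
qed

lemma ps_map_pow: "degwise_finite f \<Longrightarrow> ps_map \<phi> (ps_pow f n) = ps_pow (ps_map \<phi> f) n"
  by (induction n) (auto simp: ps_map_one ps_map_mult degwise_finite_pow)

lemma ps_map_Fsub:
  fixes f g :: "('v, 'r::comm_ring_1) pser"
  assumes "degwise_finite f" "degwise_finite g"
  shows "ps_map \<phi> (Fsub a f g) = Fsub a (ps_map \<phi> f) (ps_map \<phi> g)"
proof
  fix m'
  have "ps_map \<phi> (Fsub a f g) m' = (\<Sum>p\<in>{p. fst p + snd p \<le> mdeg m'}.
          a (fst p) (snd p) * ps_map \<phi> (ps_mult (ps_pow f (fst p)) (ps_pow g (snd p))) m')"
    by (rule ps_map_lincomb[where I="\<lambda>d. {p. fst p + snd p \<le> d}", OF Fsub_conv_lincomb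
          finite_pairs_sum_le])
       (use assms in \<open>auto intro: degwise_finite_mult degwise_finite_pow\<close>)
  then show "ps_map \<phi> (Fsub a f g) m' = Fsub a (ps_map \<phi> f) (ps_map \<phi> g) m'"
    unfolding Fsub_def using assms by (simp add: ps_map_mult degwise_finite_pow ps_map_pow)
qed

lemma ps_carrier_add:
  fixes f g :: "('v, 'r::comm_ring_1) pser"
  assumes "f \<in> ps_carrier V" "g \<in> ps_carrier V"
  shows "(\<lambda>m. f m + g m) \<in> ps_carrier V"
  using assms degwise_finite_add[of f g] unfolding ps_carrier_iff
  by (metis add.right_neutral)

lemma ps_carrier_diff:
  fixes f g :: "('v, 'r::comm_ring_1) pser"
  assumes "f \<in> ps_carrier V" "g \<in> ps_carrier V"
  shows "(\<lambda>m. f m - g m) \<in> ps_carrier V"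
  using assms degwise_finite_diff[of f g] unfolding ps_carrier_iff
  by (metis diff_self diff_zero)

lemma fgr_gens_degwise_finite:
  fixes a :: "nat \<Rightarrow> nat \<Rightarrow> 'r::comm_ring_1"
  assumes "g \<in> fgr_gens a G"
  shows "degwise_finite g"
  using assms unfolding fgr_gens_def
  by (auto intro!: degwise_finite_X degwise_finite_diff degwise_finite_Fsub)

lemma fgr_ideal_degwise_finite: "j \<in> fgr_ideal a G \<Longrightarrow> degwise_finite j"
proof (induction rule: fgr_ideal.induct)
  case zero
  then show ?case by (rule degwise_finite_zero)
next
  case (step j h g)
  then show ?case
    by (simp add: degwise_finite_add degwise_finite_mult ps_carrier_degwise_finite
          fgr_gens_degwise_finite)
qed

lemma fgr_ideal_add:
  assumes "j1 \<in> fgr_ideal a G" "j2 \<in> fgr_ideal a G"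
  shows "(\<lambda>m. j1 m + j2 m) \<in> fgr_ideal a G"
  using assms(2)
proof (induction rule: fgr_ideal.induct)
  case zero
  then show ?case using assms(1) by simp
next
  case (step j h g)
  then show ?case
    using fgr_ideal.step[OF step.IH step.hyps(2,3)] by (simp add: add.assoc)
qed

lemma fgr_ideal_uminus:
  assumes "j \<in> fgr_ideal a G"
  shows "(\<lambda>m. - j m) \<in> fgr_ideal a G"
  using assms
proof (induction rule: fgr_ideal.induct)
  case zero
  then show ?case by (simp add: fgr_ideal.zero)
next
  case (step j h g)
  have "(\<lambda>m. - h m) \<in> ps_carrier G"
    using step.hyps(2) unfolding ps_carrier_def by simp
  then have "(\<lambda>m. - j m + ps_mult (\<lambda>m. - h m) g m) \<in> fgr_ideal a G"
    by (rule fgr_ideal.step[OF step.IH _ step.hyps(3)])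
  moreover have "ps_mult (\<lambda>m. - h m) g = (\<lambda>m. - ps_mult h g m)"
    unfolding ps_mult_def by (simp add: sum_negf)
  ultimately show ?case
    by (simp add: minus_add)
qed

lemma fgr_ideal_mono:
  assumes "G \<subseteq> G'" "j \<in> fgr_ideal a G"
  shows "j \<in> fgr_ideal a G'"
  using assms(2)
proof (induction rule: fgr_ideal.induct)
  case zero
  then show ?case by (rule fgr_ideal.zero)
next
  case (step j h g)
  moreover have "fgr_gens a G \<subseteq> fgr_gens a G'"
    using assms(1) unfolding fgr_gens_def by blast
  ultimately show ?case
    using ps_carrier_mono[OF assms(1)] by (blast intro: fgr_ideal.step)
qed

lemma fgr_gens_ps_map:
  fixes a :: "nat \<Rightarrow> nat \<Rightarrow> 'r::comm_ring_1" and \<phi> :: "'m::ab_group_add \<Rightarrow> 'n::ab_group_add"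
  assumes "g \<in> fgr_gens a G" and hom: "\<And>x y. \<phi> (x + y) = \<phi> x + \<phi> y" and im: "\<phi> ` G \<subseteq> G'"
  shows "ps_map \<phi> g \<in> fgr_gens a G'"
proof -
  have "\<phi> 0 = 0"
    using hom[of 0 0] by simp
  from assms(1) consider "g = ps_X 0"
    | l u where "l \<in> G" "u \<in> G" "g = (\<lambda>m. ps_X (l + u) m - Fsub a (ps_X l) (ps_X u) m)"
    unfolding fgr_gens_def by blast
  then show ?thesis
  proof cases
    case 1
    then show ?thesis by (simp add: ps_map_X \<open>\<phi> 0 = 0\<close> fgr_gens_def)
  next
    case (2 l u)
    have "ps_map \<phi> g = (\<lambda>m. ps_X (\<phi> l + \<phi> u) m - Fsub a (ps_X (\<phi> l)) (ps_X (\<phi> u)) m)"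
      unfolding 2
      by (simp add: ps_map_diff degwise_finite_X degwise_finite_Fsub ps_map_X ps_map_Fsub hom)
    moreover have "\<phi> l \<in> G'" "\<phi> u \<in> G'"
      using 2 im by auto
    ultimately show ?thesis
      unfolding fgr_gens_def by blast
  qed
qed

lemma fgr_ideal_ps_map:
  fixes a :: "nat \<Rightarrow> nat \<Rightarrow> 'r::comm_ring_1" and \<phi> :: "'m::ab_group_add \<Rightarrow> 'n::ab_group_add"
  assumes "j \<in> fgr_ideal a G" and hom: "\<And>x y. \<phi> (x + y) = \<phi> x + \<phi> y" and im: "\<And>x. \<phi> x \<in> G'"
  shows "ps_map \<phi> j \<in> fgr_ideal a G'"
  using assms(1)
proof (induction rule: fgr_ideal.induct)
  case zero
  then show ?case by (simp add: ps_map_zero fgr_ideal.zero)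
next
  case (step j h g)
  have fin: "degwise_finite j" "degwise_finite h" "degwise_finite g"
    using step.hyps fgr_ideal_degwise_finite ps_carrier_degwise_finite fgr_gens_degwise_finite
    by blast+
  have "ps_map \<phi> (\<lambda>m. j m + ps_mult h g m) =
        (\<lambda>m. ps_map \<phi> j m + ps_mult (ps_map \<phi> h) (ps_map \<phi> g) m)"
    using fin by (simp add: ps_map_add degwise_finite_mult ps_map_mult)
  moreover have "ps_map \<phi> h \<in> ps_carrier G'"
    using fin(2) im by (rule ps_carrier_ps_map)
  moreover have "ps_map \<phi> g \<in> fgr_gens a G'"
    using step.hyps(3) hom by (rule fgr_gens_ps_map) (use im in auto)
  ultimately show ?case
    using step.IH by (simp add: fgr_ideal.step)
qed

lemma fgr_eq_refl: "fgr_eq a G f f"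
  unfolding fgr_eq_def using fgr_ideal.zero by fastforce

lemma fgr_eq_trans:
  assumes "fgr_eq a G f g" "fgr_eq a G g h"
  shows "fgr_eq a G f h"
  unfolding fgr_eq_def
proof
  fix n
  obtain j1 j2 where "j1 \<in> fgr_ideal a G" "\<forall>m. mdeg m < n \<longrightarrow> f m - g m = j1 m"
    and "j2 \<in> fgr_ideal a G" "\<forall>m. mdeg m < n \<longrightarrow> g m - h m = j2 m"
    using assms unfolding fgr_eq_def by meson
  then show "\<exists>j\<in>fgr_ideal a G. \<forall>m. mdeg m < n \<longrightarrow> f m - h m = j m"
    by (intro bexI[of _ "\<lambda>m. j1 m + j2 m"] fgr_ideal_add) (auto simp: algebra_simps)
qed

lemma fgr_eq_add_diff:
  assumes "fgr_eq a G f g" "fgr_eq a G v u"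
  shows "fgr_eq a G (\<lambda>m. f m + u m - v m) g"
  unfolding fgr_eq_def
proof
  fix n
  obtain j1 j2 where "j1 \<in> fgr_ideal a G" "\<forall>m. mdeg m < n \<longrightarrow> f m - g m = j1 m"
    and "j2 \<in> fgr_ideal a G" "\<forall>m. mdeg m < n \<longrightarrow> v m - u m = j2 m"
    using assms unfolding fgr_eq_def by meson
  then show "\<exists>j\<in>fgr_ideal a G. \<forall>m. mdeg m < n \<longrightarrow> f m + u m - v m - g m = j m"
    by (intro bexI[of _ "\<lambda>m. j1 m + - j2 m"] fgr_ideal_add fgr_ideal_uminus)
       (auto simp: algebra_simps)
qed

lemma fgr_eq_mono: "G \<subseteq> G' \<Longrightarrow> fgr_eq a G f g \<Longrightarrow> fgr_eq a G' f g"
  unfolding fgr_eq_def using fgr_ideal_mono by blast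

lemma fgr_eq_ps_map:
  fixes a :: "nat \<Rightarrow> nat \<Rightarrow> 'r::comm_ring_1" and \<phi> :: "'m::ab_group_add \<Rightarrow> 'n::ab_group_add"
  assumes "fgr_eq a G f g" "degwise_finite f" "degwise_finite g"
    and hom: "\<And>x y. \<phi> (x + y) = \<phi> x + \<phi> y" and im: "\<And>x. \<phi> x \<in> G'"
  shows "fgr_eq a G' (ps_map \<phi> f) (ps_map \<phi> g)"
  unfolding fgr_eq_def
proof
  fix n
  obtain j where j: "j \<in> fgr_ideal a G" "\<And>m. mdeg m < n \<Longrightarrow> f m - g m = j m"
    using assms(1) unfolding fgr_eq_def by blast
  have "ps_map \<phi> f m' - ps_map \<phi> g m' = ps_map \<phi> j m'" if "mdeg m' < n" for m'
  proof -
    have "ps_map \<phi> f m' - ps_map \<phi> g m' = ps_map \<phi> (\<lambda>m. f m - g m) m'"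
      by (simp add: ps_map_diff[OF assms(2,3)])
    also have "\<dots> = ps_map \<phi> j m'"
      by (rule ps_map_cong_mdeg)
         (use degwise_finite_diff[OF assms(2,3)] fgr_ideal_degwise_finite[OF j(1)] j(2) that in auto)
    finally show ?thesis .
  qed
  moreover have "ps_map \<phi> j \<in> fgr_ideal a G'"
    using j(1) hom im by (rule fgr_ideal_ps_map)
  ultimately show "\<exists>j\<in>fgr_ideal a G'. \<forall>m. mdeg m < n \<longrightarrow> ps_map \<phi> f m - ps_map \<phi> g m = j m"
    by blast
qed

lemma lookup_zrestr:
  "Poly_Mapping.lookup (zrestr S l) v = (if v \<in> S then Poly_Mapping.lookup l v else 0)"
proof -
  have "finite {v. (if v \<in> S then Poly_Mapping.lookup l v else 0) \<noteq> 0}"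
    by (rule finite_subset[OF _ finite_lookup[of l]]) auto
  then show ?thesis
    unfolding zrestr_def by simp
qed

lemma zrestr_add: "zrestr S (x + y) = zrestr S x + zrestr S y"
  by (rule poly_mapping_eqI) (simp add: lookup_zrestr lookup_add)

lemma zrestr_in_zfree: "zrestr S l \<in> zfree S"
  unfolding zfree_def by (auto simp: in_keys_iff lookup_zrestr split: if_splits)

lemma zrestr_zrestr: "zrestr S \<circ> zrestr T = zrestr (S \<inter> T)"
  by (rule ext, rule poly_mapping_eqI) (simp add: lookup_zrestr)

lemma zrestr_zfree: "l \<in> zfree S \<Longrightarrow> zrestr S l = l"
  unfolding zfree_def by (rule poly_mapping_eqI) (auto simp: lookup_zrestr in_keys_iff)

lemma zfree_mono: "S \<subseteq> T \<Longrightarrow> zfree S \<subseteq> zfree T"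
  unfolding zfree_def by auto

abbreviation ps_restr :: "'a set \<Rightarrow> ('a \<Rightarrow>\<^sub>0 int, 'r::comm_ring_1) pser \<Rightarrow> ('a \<Rightarrow>\<^sub>0 int, 'r) pser"
  where "ps_restr S f \<equiv> ps_map (zrestr S) f"

lemma ps_restr_ps_restr: "degwise_finite f \<Longrightarrow> ps_restr S (ps_restr T f) = ps_restr (S \<inter> T) f"
  by (simp add: ps_map_comp zrestr_zrestr)

lemma ps_restr_ps_carrier: "f \<in> ps_carrier (zfree S) \<Longrightarrow> ps_restr S f = f"
  by (rule ps_map_cong_id) (auto simp: zrestr_zfree)

lemma ps_carrier_ps_restr: "degwise_finite f \<Longrightarrow> ps_restr S f \<in> ps_carrier (zfree S)"
  by (rule ps_carrier_ps_map) (auto simp: zrestr_in_zfree)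

lemma fgr_eq_ps_restr:
  fixes a :: "nat \<Rightarrow> nat \<Rightarrow> 'r::comm_ring_1"
  assumes "fgr_eq a G f g" "degwise_finite f" "degwise_finite g"
  shows "fgr_eq a (zfree S) (ps_restr S f) (ps_restr S g)"
  by (rule fgr_eq_ps_map[OF assms]) (auto simp: zrestr_add zrestr_in_zfree)

lemma ps_restr_correction_self:
  assumes "degwise_finite b" "A \<in> ps_carrier (zfree \<tau>)"
  shows "ps_restr \<tau> (\<lambda>m. b m + A m - ps_restr \<tau> b m) = A"
proof -
  have fin_A: "degwise_finite A"
    using assms(2) by (rule ps_carrier_degwise_finite)
  have "ps_restr \<tau> (\<lambda>m. b m + A m - ps_restr \<tau> b m) =
        (\<lambda>m. ps_restr \<tau> b m + ps_restr \<tau> A m - ps_restr \<tau> (ps_restr \<tau> b) m)"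
    using assms(1) fin_A
    by (simp add: ps_map_diff ps_map_add degwise_finite_add degwise_finite_ps_map)
  then show ?thesis
    by (simp add: ps_restr_ps_restr[OF assms(1)] ps_restr_ps_carrier[OF assms(2)])
qed

lemma ps_restr_correction_other:
  assumes fin_b: "degwise_finite b" and A\<tau>: "A\<tau> \<in> ps_carrier (zfree \<tau>)"
    and fin_A\<sigma>: "degwise_finite A\<sigma>"
    and b_\<sigma>: "fgr_eq a (zfree \<sigma>) (ps_restr \<sigma> b) A\<sigma>"
    and compatible: "fgr_eq a (zfree (\<sigma> \<inter> \<tau>)) (ps_restr (\<sigma> \<inter> \<tau>) A\<sigma>) (ps_restr (\<sigma> \<inter> \<tau>) A\<tau>)"
  shows "fgr_eq a (zfree \<sigma>) (ps_restr \<sigma> (\<lambda>m. b m + A\<tau> m - ps_restr \<tau> b m)) A\<sigma>"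
proof -
  have fin_A\<tau>: "degwise_finite A\<tau>"
    using A\<tau> by (rule ps_carrier_degwise_finite)
  have "ps_restr \<sigma> (\<lambda>m. b m + A\<tau> m - ps_restr \<tau> b m) =
        (\<lambda>m. ps_restr \<sigma> b m + ps_restr \<sigma> A\<tau> m - ps_restr \<sigma> (ps_restr \<tau> b) m)"
    using fin_b fin_A\<tau>
    by (simp add: ps_map_diff ps_map_add degwise_finite_add degwise_finite_ps_map)
  also have "\<dots> = (\<lambda>m. ps_restr \<sigma> b m + ps_restr (\<sigma> \<inter> \<tau>) A\<tau> m - ps_restr (\<sigma> \<inter> \<tau>) b m)"
    using ps_restr_ps_restr[OF fin_A\<tau>, of \<sigma> \<tau>]
    by (simp add: ps_restr_ps_restr[OF fin_b] ps_restr_ps_carrier[OF A\<tau>])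
  finally have restr: "ps_restr \<sigma> (\<lambda>m. b m + A\<tau> m - ps_restr \<tau> b m) = \<dots>" .
  have "fgr_eq a (zfree (\<sigma> \<inter> \<tau>)) (ps_restr (\<sigma> \<inter> \<tau>) (ps_restr \<sigma> b)) (ps_restr (\<sigma> \<inter> \<tau>) A\<sigma>)"
    by (rule fgr_eq_ps_restr[OF b_\<sigma> degwise_finite_ps_map[OF fin_b] fin_A\<sigma>])
  then have "fgr_eq a (zfree (\<sigma> \<inter> \<tau>)) (ps_restr (\<sigma> \<inter> \<tau>) b) (ps_restr (\<sigma> \<inter> \<tau>) A\<tau>)"
    using fgr_eq_trans[OF _ compatible] ps_restr_ps_restr[OF fin_b, of "\<sigma> \<inter> \<tau>" \<sigma>]
    by (simp add: Int_commute Int_left_commute)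
  then have "fgr_eq a (zfree \<sigma>) (ps_restr (\<sigma> \<inter> \<tau>) b) (ps_restr (\<sigma> \<inter> \<tau>) A\<tau>)"
    by (rule fgr_eq_mono[OF zfree_mono, rotated]) blast
  then show ?thesis
    unfolding restr by (rule fgr_eq_add_diff[OF b_\<sigma>])
qed

lemma ps_restr_glue:
  fixes a :: "nat \<Rightarrow> nat \<Rightarrow> 'r::comm_ring_1" and A :: "'a set \<Rightarrow> ('a \<Rightarrow>\<^sub>0 int, 'r) pser"
  assumes "finite C"
    and "\<And>\<tau>. \<tau> \<in> C \<Longrightarrow> A \<tau> \<in> ps_carrier (zfree \<tau>)"
    and "\<And>\<tau> \<tau>'. \<tau> \<in> C \<Longrightarrow> \<tau>' \<in> C \<Longrightarrow> \<tau> \<noteq> \<tau>' \<Longrightarrow>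
           fgr_eq a (zfree (\<tau> \<inter> \<tau>')) (ps_restr (\<tau> \<inter> \<tau>') (A \<tau>)) (ps_restr (\<tau> \<inter> \<tau>') (A \<tau>'))"
    and "\<And>\<tau>. \<tau> \<in> C \<Longrightarrow> \<tau> \<subseteq> U"
  shows "\<exists>b\<in>ps_carrier (zfree U). \<forall>\<tau>\<in>C. fgr_eq a (zfree \<tau>) (ps_restr \<tau> b) (A \<tau>)"
  using assms
proof (induction C rule: finite_induct)
  case empty
  have "(\<lambda>_. 0) \<in> ps_carrier (zfree U)"
    unfolding ps_carrier_def by simp
  then show ?case by blast
next
  case (insert \<tau> C)
  have "\<exists>b\<in>ps_carrier (zfree U). \<forall>\<sigma>\<in>C. fgr_eq a (zfree \<sigma>) (ps_restr \<sigma> b) (A \<sigma>)"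
    by (rule insert.IH) (simp_all add: insert.prems)
  then obtain b where b: "b \<in> ps_carrier (zfree U)"
    and b_C: "\<forall>\<sigma>\<in>C. fgr_eq a (zfree \<sigma>) (ps_restr \<sigma> b) (A \<sigma>)"
    by blast
  have fin_b: "degwise_finite b"
    using b by (rule ps_carrier_degwise_finite)
  have A\<tau>: "A \<tau> \<in> ps_carrier (zfree \<tau>)" and \<tau>U: "zfree \<tau> \<subseteq> zfree U"
    using insert.prems(1) zfree_mono[OF insert.prems(3)] by simp_all
  define b' where "b' = (\<lambda>m. b m + A \<tau> m - ps_restr \<tau> b m)"
  have "b' \<in> ps_carrier (zfree U)"
    unfolding b'_def using A\<tau> ps_carrier_ps_restr[OF fin_b] ps_carrier_mono[OF \<tau>U]
    by (intro ps_carrier_diff ps_carrier_add b) blast+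
  moreover have "fgr_eq a (zfree \<sigma>) (ps_restr \<sigma> b') (A \<sigma>)" if "\<sigma> \<in> insert \<tau> C" for \<sigma>
  proof (cases "\<sigma> = \<tau>")
    case True
    then show ?thesis
      unfolding b'_def by (simp add: ps_restr_correction_self[OF fin_b A\<tau>] fgr_eq_refl)
  next
    case False
    then have "\<sigma> \<in> C"
      using that by blast
    then show ?thesis
      unfolding b'_def using False b_C insert.prems(1,2)
      by (intro ps_restr_correction_other[OF fin_b A\<tau>] ps_carrier_degwise_finite[of _ "zfree \<sigma>"])
         simp_all
  qed
  ultimately show ?case
    by blast
qed

theorem proposition3p2:
  fixes a :: "nat \<Rightarrow> nat \<Rightarrow> 'r::comm_ring_1"
    and \<Sigma> :: "(int^'d::finite) set set"
  assumes "formal_group_law a"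
    and "smooth_fan \<Sigma>"
  shows "(\<forall>b\<in>ps_carrier (zfree (\<Union>\<Sigma>)).
            \<forall>\<tau>\<in>max_cones \<Sigma>. \<forall>\<tau>'\<in>max_cones \<Sigma>. \<tau> \<noteq> \<tau>' \<longrightarrow>
              fgr_eq a (zfree (\<tau> \<inter> \<tau>'))
                (ps_map (zrestr (\<tau> \<inter> \<tau>')) (ps_map (zrestr \<tau>) b))
                (ps_map (zrestr (\<tau> \<inter> \<tau>')) (ps_map (zrestr \<tau>') b)))
       \<and> (\<forall>A. (\<forall>\<tau>\<in>max_cones \<Sigma>. A \<tau> \<in> ps_carrier (zfree \<tau>)) \<and>
              (\<forall>\<tau>\<in>max_cones \<Sigma>. \<forall>\<tau>'\<in>max_cones \<Sigma>. \<tau> \<noteq> \<tau>' \<longrightarrow>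
                 fgr_eq a (zfree (\<tau> \<inter> \<tau>'))
                   (ps_map (zrestr (\<tau> \<inter> \<tau>')) (A \<tau>))
                   (ps_map (zrestr (\<tau> \<inter> \<tau>')) (A \<tau>')))
            \<longrightarrow> (\<exists>b\<in>ps_carrier (zfree (\<Union>\<Sigma>)).
                   \<forall>\<tau>\<in>max_cones \<Sigma>. fgr_eq a (zfree \<tau>) (ps_map (zrestr \<tau>) b) (A \<tau>)))"
proof -
  have fin: "finite (max_cones \<Sigma>)"
    using assms(2) unfolding smooth_fan_def max_cones_def by (auto intro: rev_finite_subset)
  have sub: "\<tau> \<subseteq> \<Union>\<Sigma>" if "\<tau> \<in> max_cones \<Sigma>" for \<tau>
    using that unfolding max_cones_def by blast
  have "fgr_eq a (zfree (\<tau> \<inter> \<tau>'))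
          (ps_restr (\<tau> \<inter> \<tau>') (ps_restr \<tau> b)) (ps_restr (\<tau> \<inter> \<tau>') (ps_restr \<tau>' b))"
    if "b \<in> ps_carrier (zfree (\<Union>\<Sigma>))" for b and \<tau> \<tau>' :: "(int^'d) set"
  proof -
    have "\<tau> \<inter> \<tau>' \<inter> \<tau> = \<tau> \<inter> \<tau>'" "\<tau> \<inter> \<tau>' \<inter> \<tau>' = \<tau> \<inter> \<tau>'"
      by auto
    then show ?thesis
      by (simp add: ps_restr_ps_restr[OF ps_carrier_degwise_finite[OF that]] fgr_eq_refl)
  qed
  moreover have "\<exists>b\<in>ps_carrier (zfree (\<Union>\<Sigma>)). \<forall>\<tau>\<in>max_cones \<Sigma>. fgr_eq a (zfree \<tau>) (ps_restr \<tau> b) (A \<tau>)"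
    if "(\<forall>\<tau>\<in>max_cones \<Sigma>. A \<tau> \<in> ps_carrier (zfree \<tau>)) \<and>
        (\<forall>\<tau>\<in>max_cones \<Sigma>. \<forall>\<tau>'\<in>max_cones \<Sigma>. \<tau> \<noteq> \<tau>' \<longrightarrow>
           fgr_eq a (zfree (\<tau> \<inter> \<tau>')) (ps_restr (\<tau> \<inter> \<tau>') (A \<tau>)) (ps_restr (\<tau> \<inter> \<tau>') (A \<tau>')))"
    for A
    using that by (intro ps_restr_glue[OF fin] sub) auto
  ultimately show ?thesis
    by (intro conjI ballI allI impI)
qed

end
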